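(* Consider one iteration of the $r$-cGA (without frequency borders) on \textit{G}-OneMax with current frequencies $p^{(t)}_{i,j}$, $(i,j)\in\{1,\dots,n\}\times\{0,\dots,r-1\}$, and let $x,y$ be the two strings sampled in this iteration. Fix $i\in\{1,\dots,n\}$ and let $D_i=\sum_{j\ne i}x_j-\sum_{j\ne i}y_j$. Then, for sufficiently large $n$, \[\Pr[D_i=0]\ge \frac{4}{9\left(2(r-1)\sqrt{3n}+1\right)}.\]
   Context: Let $n\ge 1$, $r\ge 2$ be integers and $K>0$. \textit{G}-OneMax$(x)=\sum_{i=1}^n x_i$ for $x\in\{0,\dots,r-1\}^n$. The $r$-cGA with parameter $K$ maintains frequencies $p^{(t)}_{i,j}$ (each row a probability distribution over $\{0,\dots,r-1\}$), initially $1/r$. In iteration $t$ it samples two strings $x,y$ independently, each position $i$ of each string taking value $j$ with probability $p^{(t)}_{i,j}$ independently of other positions; if $f(x)<f(y)$ they are swapped; then $p^{(t+1)}_{i,j}=p^{(t)}_{i,j}+\frac1K(\mathbf 1[x_i=j]-\mathbf 1[y_i=j])$. *)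

theory Defs
  imports Complex_Main "HOL-Library.FuncSet"
begin

text \<open>Positions are indexed 0..n-1 (instead of 1..n), values 0..r-1.
  A string is an extensional function on {0..<n} with values in {0..<r}.\<close>
definition strings :: "nat \<Rightarrow> nat \<Rightarrow> (nat \<Rightarrow> nat) set" where
  "strings n r = PiE {0..<n} (\<lambda>_. {0..<r})"

definition freq_ok :: "nat \<Rightarrow> nat \<Rightarrow> (nat \<Rightarrow> nat \<Rightarrow> real) \<Rightarrow> bool" where
  "freq_ok n r p \<longleftrightarrow> (\<forall>i<n. (\<forall>j<r. 0 \<le> p i j) \<and> (\<Sum>j<r. p i j) = 1)"

definition string_prob :: "nat \<Rightarrow> (nat \<Rightarrow> nat \<Rightarrow> real) \<Rightarrow> (nat \<Rightarrow> nat) \<Rightarrow> real" where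
  "string_prob n p x = (\<Prod>k<n. p k (x k))"

text \<open>Pr[D_i = 0] where x, y are sampled independently and
  D_i = sum_{k \<noteq> i} x_k - sum_{k \<noteq> i} y_k.  (The swap by fitness only
  negates D_i, so it does not affect this event.)\<close>
definition prob_D_zero :: "nat \<Rightarrow> nat \<Rightarrow> (nat \<Rightarrow> nat \<Rightarrow> real) \<Rightarrow> nat \<Rightarrow> real" where
  "prob_D_zero n r p i =
     (\<Sum>(x, y) \<in> {(x, y) \<in> strings n r \<times> strings n r.
                    (\<Sum>k\<in>{0..<n} - {i}. x k) = (\<Sum>k\<in>{0..<n} - {i}. y k)}.
        string_prob n p x * string_prob n p y)"

end

theory Submission
  imports Defs "HOL-Analysis.Convex"
begin

text \<open>Let S be the sum of the entries x_k, k \<noteq> i, of one sampled string; since x and y are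
  independent and identically distributed, Pr[D_i = 0] is the collision probability
  \<Sum>_s Pr[S = s]^2 of S. The entries are independent with values in {0..r-1}, so
  Var S \<le> n (r-1)^2, and by Chebyshev S takes, with probability at least 2/3, one of the
  at most 2c+1 integer values within c = (r-1) sqrt(3n) of its mean. Cauchy-Schwarz over
  these values gives \<Sum>_s Pr[S = s]^2 \<ge> (2/3)^2 / (2c+1).\<close>

lemma chebyshev_weighted_sum:
  fixes w f :: "'a \<Rightarrow> real"
  assumes "finite A" "\<And>x. x \<in> A \<Longrightarrow> 0 \<le> w x" "0 < c"
  shows "sum w {x\<in>A. c < \<bar>f x\<bar>} \<le> (\<Sum>x\<in>A. w x * (f x)^2) / c^2"
proof -
  have "sum w {x\<in>A. c < \<bar>f x\<bar>} \<le> (\<Sum>x\<in>{x\<in>A. c < \<bar>f x\<bar>}. w x * (f x)^2 / c^2)"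
  proof (rule sum_mono)
    fix x assume x: "x \<in> {x\<in>A. c < \<bar>f x\<bar>}"
    then have "c^2 \<le> (f x)^2"
      using \<open>0 < c\<close> by (metis abs_le_square_iff abs_of_pos less_imp_le mem_Collect_eq)
    then have "1 \<le> (f x)^2 / c^2"
      using \<open>0 < c\<close> by simp
    then show "w x \<le> w x * (f x)^2 / c^2"
      using assms(2) x mult_left_mono[of 1 "(f x)^2 / c^2" "w x"] by simp
  qed
  also have "\<dots> \<le> (\<Sum>x\<in>A. w x * (f x)^2 / c^2)"
    using assms(1,2) by (intro sum_mono2) auto
  also have "\<dots> = (\<Sum>x\<in>A. w x * (f x)^2) / c^2"
    by (simp add: sum_divide_distrib)
  finally show ?thesis .
qed

lemma collision_sum_eq_sum_squares:
  fixes w :: "'a \<Rightarrow> real" and S :: "'a \<Rightarrow> 'b"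
  assumes "finite A"
  shows "(\<Sum>(x, y)\<in>{(x, y)\<in>A \<times> A. S x = S y}. w x * w y)
       = (\<Sum>s\<in>S ` A. (sum w {x\<in>A. S x = s})^2)"
proof -
  define P where "P s = sum w {x\<in>A. S x = s}" for s
  have "{(x, y)\<in>A \<times> A. S x = S y} = Sigma A (\<lambda>x. {y\<in>A. S y = S x})"
    by auto
  then have "(\<Sum>(x, y)\<in>{(x, y)\<in>A \<times> A. S x = S y}. w x * w y)
           = (\<Sum>x\<in>A. \<Sum>y\<in>{y\<in>A. S y = S x}. w x * w y)"
    using assms by (simp add: sum.Sigma)
  also have "\<dots> = (\<Sum>x\<in>A. w x * P (S x))"
    by (simp add: P_def sum_distrib_left)
  also have "\<dots> = (\<Sum>s\<in>S ` A. \<Sum>x\<in>{x\<in>A. S x = s}. w x * P s)"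
    using sum.image_gen[OF assms, of "\<lambda>x. w x * P (S x)" S] by simp
  also have "\<dots> = (\<Sum>s\<in>S ` A. (P s)^2)"
    by (simp add: P_def power2_eq_square sum_distrib_right)
  finally show ?thesis
    by (simp add: P_def)
qed

lemma card_nat_set_within_radius:
  fixes T :: "nat set"
  assumes "finite T" "\<And>s. s \<in> T \<Longrightarrow> \<bar>real s - m\<bar> \<le> c" "0 \<le> c"
  shows "real (card T) \<le> 2 * c + 1"
proof (cases "T = {}")
  case True
  then show ?thesis using assms(3) by simp
next
  case False
  have "card T \<le> card {Min T..Max T}"
    using assms(1) by (intro card_mono) auto
  moreover have "Min T \<le> Max T"
    using assms(1) False by simp
  moreover have "real (Max T) - real (Min T) \<le> 2 * c"
    using assms(2)[OF Max_in[OF assms(1) False]] assms(2)[OF Min_in[OF assms(1) False]]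
    by linarith
  ultimately show ?thesis
    by (simp add: of_nat_diff)
qed

lemma collision_sum_lower_bound:
  fixes w :: "'a \<Rightarrow> real" and S :: "'a \<Rightarrow> nat"
  assumes A: "finite A" and w: "\<And>x. x \<in> A \<Longrightarrow> 0 \<le> w x" "sum w A = 1"
    and c: "0 < c" "V \<le> c^2"
    and var: "(\<Sum>x\<in>A. w x * (real (S x) - m)^2) \<le> V"
  shows "(1 - V / c^2)^2 / (2 * c + 1) \<le> (\<Sum>s\<in>S ` A. (sum w {x\<in>A. S x = s})^2)"
proof -
  define P where "P s = sum w {x\<in>A. S x = s}" for s
  define G where "G = {x\<in>A. \<bar>real (S x) - m\<bar> \<le> c}"
  have GA: "G \<subseteq> A" and fG: "finite G"
    using A by (auto simp: G_def)
  have "sum w (A - G) \<le> V / c^2"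
  proof -
    have "A - G = {x\<in>A. c < \<bar>real (S x) - m\<bar>}"
      by (auto simp: G_def)
    then have "sum w (A - G) \<le> (\<Sum>x\<in>A. w x * (real (S x) - m)^2) / c^2"
      using chebyshev_weighted_sum[OF A w(1) c(1)] by simp
    also have "\<dots> \<le> V / c^2"
      using var by (simp add: divide_right_mono)
    finally show ?thesis .
  qed
  then have mass_G: "1 - V / c^2 \<le> sum w G"
    using sum.subset_diff[OF GA A, of w] w(2) by simp
  have "sum w G = (\<Sum>s\<in>S ` G. sum w {x\<in>G. S x = s})"
    using sum.image_gen[OF fG] by blast
  \<comment> \<open>G is a union of fibres of S, so its fibres are those of A\<close>
  also have "\<dots> = (\<Sum>s\<in>S ` G. P s)"
    by (intro sum.cong) (auto simp: P_def G_def intro!: arg_cong[where f = "sum w"])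
  finally have "(1 - V / c^2)^2 \<le> (\<Sum>s\<in>S ` G. P s)^2"
    using mass_G c by (intro power_mono) (auto simp: field_simps)
  also have "\<dots> \<le> (\<Sum>s\<in>S ` G. (P s)^2) * real (card (S ` G))"
    by (rule sum_squared_le_sum_of_squares)
  also have "\<dots> \<le> (\<Sum>s\<in>S ` A. (P s)^2) * (2 * c + 1)"
  proof (rule mult_mono)
    show "(\<Sum>s\<in>S ` G. (P s)^2) \<le> (\<Sum>s\<in>S ` A. (P s)^2)"
      using A GA by (intro sum_mono2) auto
    show "real (card (S ` G)) \<le> 2 * c + 1"
      using fG c by (intro card_nat_set_within_radius[where m = m]) (auto simp: G_def)
  qed (auto intro!: sum_nonneg)
  finally show ?thesis
    using c by (simp add: P_def divide_le_eq)
qed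

lemma finite_strings: "finite (strings n r)"
  by (simp add: strings_def finite_PiE)

lemma string_prob_nonneg:
  assumes "freq_ok n r p" "x \<in> strings n r"
  shows "0 \<le> string_prob n p x"
  using assms unfolding strings_def string_prob_def freq_ok_def
  by (auto intro!: prod_nonneg simp: PiE_def Pi_def)

lemma sum_strings_prod:
  fixes g :: "nat \<Rightarrow> nat \<Rightarrow> real"
  shows "(\<Sum>x\<in>strings n r. \<Prod>k<n. g k (x k)) = (\<Prod>k<n. \<Sum>j<r. g k j)"
  using prod_sum_PiE[of "{0..<n}" "\<lambda>_. {0..<r}" g]
  by (simp add: strings_def lessThan_atLeast0)

lemma sum_string_prob:
  assumes "freq_ok n r p"
  shows "(\<Sum>x\<in>strings n r. string_prob n p x) = 1"
  using sum_strings_prod[of p n r] assms unfolding string_prob_def freq_ok_def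
  by simp

lemma expectation_prod_coordinates:
  fixes f :: "nat \<Rightarrow> nat \<Rightarrow> real"
  assumes p: "freq_ok n r p" and K: "K \<subseteq> {..<n}"
  shows "(\<Sum>x\<in>strings n r. string_prob n p x * (\<Prod>k\<in>K. f k (x k)))
       = (\<Prod>k\<in>K. \<Sum>j<r. p k j * f k j)"
proof -
  define g where "g k j = p k j * (if k \<in> K then f k j else 1)" for k j
  have restrict: "(\<Prod>k<n. if k \<in> K then h k else 1) = (\<Prod>k\<in>K. h k)" for h :: "nat \<Rightarrow> real"
    using prod.inter_restrict[of "{..<n}" h K] K by (simp add: Int_absorb1)
  have "(\<Prod>k<n. g k (x k)) = string_prob n p x * (\<Prod>k<n. if k \<in> K then f k (x k) else 1)" for x
    unfolding g_def string_prob_def by (simp only: prod.distrib)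
  then have "string_prob n p x * (\<Prod>k\<in>K. f k (x k)) = (\<Prod>k<n. g k (x k))" for x
    by (simp add: restrict)
  then have "(\<Sum>x\<in>strings n r. string_prob n p x * (\<Prod>k\<in>K. f k (x k)))
           = (\<Prod>k<n. \<Sum>j<r. g k j)"
    by (simp add: sum_strings_prod)
  also have "\<dots> = (\<Prod>k<n. if k \<in> K then \<Sum>j<r. p k j * f k j else 1)"
    using p by (intro prod.cong) (auto simp: g_def freq_ok_def)
  finally show ?thesis
    by (simp add: restrict)
qed

definition row_mean :: "nat \<Rightarrow> (nat \<Rightarrow> nat \<Rightarrow> real) \<Rightarrow> nat \<Rightarrow> real" where
  "row_mean r p k = (\<Sum>j<r. p k j * real j)"

lemma row_mean_bounds:
  assumes "freq_ok n r p" "k < n"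
  shows "0 \<le> row_mean r p k" "row_mean r p k \<le> real r - 1"
proof -
  have nn: "\<forall>j<r. 0 \<le> p k j" and one: "(\<Sum>j<r. p k j) = 1"
    using assms unfolding freq_ok_def by auto
  show "0 \<le> row_mean r p k"
    unfolding row_mean_def using nn by (auto intro!: sum_nonneg)
  have "row_mean r p k \<le> (\<Sum>j<r. p k j * (real r - 1))"
    unfolding row_mean_def using nn by (intro sum_mono mult_left_mono) auto
  also have "\<dots> = real r - 1"
    using one by (simp add: sum_distrib_right[symmetric])
  finally show "row_mean r p k \<le> real r - 1" .
qed

lemma row_centered_mean:
  assumes "freq_ok n r p" "k < n"
  shows "(\<Sum>j<r. p k j * (real j - row_mean r p k)) = 0"
  using assms unfolding freq_ok_def
  by (simp add: algebra_simps sum_subtractf sum_distrib_right[symmetric] row_mean_def)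

lemma row_variance_le:
  assumes "freq_ok n r p" "k < n"
  shows "(\<Sum>j<r. p k j * (real j - row_mean r p k)^2) \<le> (real r - 1)^2"
proof -
  have nn: "\<forall>j<r. 0 \<le> p k j" and one: "(\<Sum>j<r. p k j) = 1"
    using assms unfolding freq_ok_def by auto
  have "(\<Sum>j<r. p k j * (real j - row_mean r p k)^2) \<le> (\<Sum>j<r. p k j * (real r - 1)^2)"
  proof (intro sum_mono mult_left_mono)
    fix j assume "j \<in> {..<r}"
    then have "\<bar>real j - row_mean r p k\<bar> \<le> real r - 1"
      using row_mean_bounds[OF assms] by auto
    then show "(real j - row_mean r p k)^2 \<le> (real r - 1)^2"
      by (metis abs_ge_zero abs_le_square_iff abs_of_nonneg order.trans)
  qed (use nn in auto)
  also have "\<dots> = (real r - 1)^2"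
    using one by (simp add: sum_distrib_right[symmetric])
  finally show ?thesis .
qed

lemma variance_partial_sum_le:
  assumes p: "freq_ok n r p" and K: "K \<subseteq> {..<n}"
  shows "(\<Sum>x\<in>strings n r. string_prob n p x
            * (real (\<Sum>k\<in>K. x k) - (\<Sum>k\<in>K. row_mean r p k))^2)
       \<le> real (card K) * (real r - 1)^2"
proof -
  let ?d = "\<lambda>k j. real j - row_mean r p k"
  let ?E = "\<lambda>h. \<Sum>x\<in>strings n r. string_prob n p x * h x"
  have fK: "finite K"
    using K finite_subset by blast
  have cov: "?E (\<lambda>x. ?d k (x k) * ?d l (x l))
           = (if k = l then \<Sum>j<r. p k j * (?d k j)^2 else 0)" if "k \<in> K" "l \<in> K" for k l
  proof (cases "k = l")
    case True
    then show ?thesis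
      using expectation_prod_coordinates[OF p, of "{k}" "\<lambda>_ j. (?d k j)^2"] that K
      by (auto simp: power2_eq_square)
  next
    case False
    then show ?thesis
      using expectation_prod_coordinates[OF p, of "{k, l}" ?d] that K
      by (auto simp: row_centered_mean[OF p] mult.assoc)
  qed
  have "?E (\<lambda>x. (\<Sum>k\<in>K. ?d k (x k))^2)
      = (\<Sum>x\<in>strings n r. \<Sum>k\<in>K. \<Sum>l\<in>K. string_prob n p x * (?d k (x k) * ?d l (x l)))"
    unfolding power2_eq_square sum_product by (simp add: sum_distrib_left)
  also have "\<dots> = (\<Sum>k\<in>K. \<Sum>l\<in>K. ?E (\<lambda>x. ?d k (x k) * ?d l (x l)))"
    by (subst sum.swap, rule sum.cong[OF refl], rule sum.swap)
  also have "\<dots> = (\<Sum>k\<in>K. \<Sum>j<r. p k j * (?d k j)^2)"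
    using fK by (simp add: cov sum.delta cong: sum.cong)
  also have "\<dots> \<le> (\<Sum>k\<in>K. (real r - 1)^2)"
    using K by (intro sum_mono row_variance_le[OF p]) auto
  finally show ?thesis
    by (simp add: sum_subtractf)
qed

theorem lemma3:
  fixes r :: nat
  assumes "r \<ge> 2"
  shows "\<exists>N::nat. \<forall>n\<ge>N. \<forall>p. freq_ok n r p \<longrightarrow> (\<forall>i<n.
           prob_D_zero n r p i \<ge> 4 / (9 * (2 * (real r - 1) * sqrt (3 * real n) + 1)))"
proof (intro exI[of _ 0] allI impI)
  fix n p i assume p: "freq_ok n r p" and i: "i < n"
  define K where "K = {0..<n} - {i}"
  define S where "S x = (\<Sum>k\<in>K. x k)" for x :: "nat \<Rightarrow> nat"
  define m where "m = (\<Sum>k\<in>K. row_mean r p k)"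
  define c where "c = (real r - 1) * sqrt (3 * real n)"
  define V where "V = real n * (real r - 1)^2"
  have V: "0 < V"
    using assms i by (simp add: V_def)
  have c: "0 < c" "c^2 = 3 * V"
    using assms i by (auto simp: c_def V_def power_mult_distrib)
  have variance: "(\<Sum>x\<in>strings n r. string_prob n p x * (real (S x) - m)^2) \<le> V"
  proof -
    have "(\<Sum>x\<in>strings n r. string_prob n p x * (real (S x) - m)^2)
        \<le> real (card K) * (real r - 1)^2"
      unfolding S_def m_def by (rule variance_partial_sum_le[OF p]) (auto simp: K_def)
    also have "\<dots> \<le> V"
      using i by (simp add: V_def K_def card_Diff_singleton mult_right_mono)
    finally show ?thesis .
  qed
  have ratio: "V / c^2 = 1 / 3"
    using V unfolding c(2) by simp
  have "4 / (9 * (2 * (real r - 1) * sqrt (3 * real n) + 1)) = (1 - V / c^2)^2 / (2 * c + 1)"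
    unfolding ratio by (simp add: c_def power2_eq_square mult.assoc)
  also have "\<dots> \<le> (\<Sum>s\<in>S ` strings n r. (sum (string_prob n p) {x\<in>strings n r. S x = s})^2)"
    using c V variance by (intro collision_sum_lower_bound finite_strings string_prob_nonneg[OF p]
        sum_string_prob[OF p]) auto
  also have "\<dots> = prob_D_zero n r p i"
    unfolding prob_D_zero_def S_def K_def by (rule collision_sum_eq_sum_squares[symmetric, OF finite_strings])
  finally show "prob_D_zero n r p i \<ge> 4 / (9 * (2 * (real r - 1) * sqrt (3 * real n) + 1))" .
qed

end
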